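(* Let $r\geqslant 2$, $n\geqslant 2r-1$, and let $\pi,\sigma\in\mathrm{Sym}_n$ with $w_H(\pi)=2r-1$ and $w_H(\sigma)=r$. Then $\sigma\in N_3(\pi)$ if and only if the following holds. There is exactly one non-trivial cycle of $\sigma$ which is not a cycle of $\pi$, all other non-trivial cycles of $\sigma$ being cycles of $\pi$. This exceptional cycle can be written as $(y_1\,\ldots\,y_t)$ with $t\geqslant 2$ in such a way that $\pi$ has a cycle $(y_1\,\ldots\,y_t\,y_{t+1}\,\ldots\,y_{t+s})$ for some $s\geqslant 1$.
   Context: $\mathrm{Sym}_n$ is the symmetric group on $[n]$, and $w_H(\pi)=|\{i:\pi(i)\neq i\}|$. $Tc(\pi)=\{(i,\pi(i)):\pi(i)\neq i\}$. For $\pi$ with $w_H(\pi)=2r-1$, $N_3(\pi)=\{\sigma\in\mathrm{Sym}_n:|Tc(\sigma)\cap Tc(\pi)|=r-1,\ |Tc(\sigma)|=r\}$. *)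

theory Defs
  imports "HOL-Combinatorics.Permutations"
begin

text \<open>Sym_n is modelled as the functions nat => nat that permute {1..n}.\<close>

definition wH :: "nat \<Rightarrow> (nat \<Rightarrow> nat) \<Rightarrow> nat" where
  "wH n \<pi> = card {i \<in> {1..n}. \<pi> i \<noteq> i}"

definition Tc :: "nat \<Rightarrow> (nat \<Rightarrow> nat) \<Rightarrow> (nat \<times> nat) set" where
  "Tc n \<pi> = {(i, \<pi> i) | i. i \<in> {1..n} \<and> \<pi> i \<noteq> i}"

definition N3 :: "nat \<Rightarrow> nat \<Rightarrow> (nat \<Rightarrow> nat) \<Rightarrow> (nat \<Rightarrow> nat) set" where
  "N3 n r \<pi> = {\<sigma>. \<sigma> permutes {1..n} \<and> card (Tc n \<sigma> \<inter> Tc n \<pi>) = r - 1 \<and> card (Tc n \<sigma>) = r}"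

definition is_cycle_of :: "(nat \<Rightarrow> nat) \<Rightarrow> nat list \<Rightarrow> bool" where
  "is_cycle_of \<pi> ys \<longleftrightarrow> length ys \<ge> 2 \<and> distinct ys \<and>
     (\<forall>i < length ys. \<pi> (ys ! i) = ys ! ((i + 1) mod length ys))"

text \<open>Supports of the non-trivial cycles of \<pi> (a cycle is determined by its support and \<pi>).\<close>
definition ncycles :: "(nat \<Rightarrow> nat) \<Rightarrow> nat set set" where
  "ncycles \<pi> = {set ys | ys. is_cycle_of \<pi> ys}"

text \<open>The cycle of \<sigma> with support C is also a cycle of \<pi>.\<close>
definition cycle_shared :: "(nat \<Rightarrow> nat) \<Rightarrow> (nat \<Rightarrow> nat) \<Rightarrow> nat set \<Rightarrow> bool" where
  "cycle_shared \<sigma> \<pi> C \<longleftrightarrow> (\<forall>x \<in> C. \<sigma> x = \<pi> x)"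

end

theory Submission
  imports Defs "HOL-Combinatorics.Orbits"
begin

text \<open>
  Since \<open>\<sigma>\<close> moves \<open>r\<close> points, \<open>\<sigma> \<in> N3 n r \<pi>\<close> says that exactly one point \<open>x\<close> moved by \<open>\<sigma>\<close> has
  \<open>\<sigma> x \<noteq> \<pi> x\<close>. Every cycle of \<open>\<sigma>\<close> avoiding \<open>x\<close> is then a cycle of \<open>\<pi>\<close>. Writing the
  cycle of \<open>\<sigma>\<close> through \<open>x\<close> so that it ends in \<open>x\<close>, the permutation \<open>\<pi>\<close> follows it
  up to \<open>x\<close> but then fails to return to its first point, so it is a proper initial segment of
  a cycle of \<open>\<pi>\<close>. Conversely, along such a truncated cycle only the last point deviates
  from \<open>\<pi>\<close>, and it is the only cycle of \<open>\<sigma>\<close> containing deviations.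
\<close>

lemma cycle_of_funpow_nth:
  assumes "is_cycle_of f zs" "j < length zs"
  shows "(f ^^ k) (zs ! j) = zs ! ((j + k) mod length zs)"
proof (induction k)
  case 0
  then show ?case using assms(2) by simp
next
  case (Suc k)
  have "(j + k) mod length zs < length zs"
    using assms(2) by (intro mod_less_divisor) linarith
  then have "f (zs ! ((j + k) mod length zs)) = zs ! (((j + k) mod length zs + 1) mod length zs)"
    using assms(1) unfolding is_cycle_of_def by blast
  then show ?case
    using Suc by (simp add: mod_Suc_eq)
qed

lemma cycle_of_moves:
  assumes "is_cycle_of f zs" "z \<in> set zs"
  shows "f z \<noteq> z"
proof -
  obtain j where j: "j < length zs" "zs ! j = z"
    using assms(2) by (metis in_set_conv_nth)
  have len: "length zs \<ge> 2" and dist: "distinct zs"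
    using assms(1) unfolding is_cycle_of_def by auto
  have "(j + 1) mod length zs \<noteq> j"
  proof (cases "j + 1 < length zs")
    case False
    then have "j + 1 = length zs" using j(1) by simp
    then show ?thesis using len by simp
  qed simp
  moreover have "(j + 1) mod length zs < length zs"
    using j(1) by (intro mod_less_divisor) linarith
  moreover have "f z = zs ! ((j + 1) mod length zs)"
    using assms(1) j unfolding is_cycle_of_def by auto
  ultimately show ?thesis
    using j nth_eq_iff_index_eq[OF dist] by metis
qed

lemma cycle_of_set_eq_orbit:
  assumes "is_cycle_of f zs" "z \<in> set zs"
  shows "set zs = orbit f z"
proof -
  obtain j where j: "j < length zs" "zs ! j = z"
    using assms(2) by (metis in_set_conv_nth)
  show ?thesis
  proof
    show "set zs \<subseteq> orbit f z"
    proof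
      fix z' assume "z' \<in> set zs"
      then obtain i where i: "i < length zs" "zs ! i = z'"
        by (metis in_set_conv_nth)
      have "(f ^^ (i + length zs - j)) z = z'"
        using cycle_of_funpow_nth[OF assms(1) j(1)] i j by simp
      then show "z' \<in> orbit f z"
        using j(1) by (auto simp: orbit_altdef intro!: exI[of _ "i + length zs - j"])
    qed
    show "orbit f z \<subseteq> set zs"
      using cycle_of_funpow_nth[OF assms(1) j(1)] j by (auto simp: orbit_altdef intro!: nth_mem mod_less_divisor)
  qed
qed

lemma cycle_of_rotate1:
  assumes "is_cycle_of f zs"
  shows "is_cycle_of f (rotate1 zs)"
  unfolding is_cycle_of_def
proof (intro conjI allI impI)
  fix i assume "i < length (rotate1 zs)"
  then have "i < length zs" "Suc i mod length zs < length zs"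
    by (auto intro: mod_less_divisor)
  then show "f (rotate1 zs ! i) = rotate1 zs ! ((i + 1) mod length (rotate1 zs))"
    using assms unfolding is_cycle_of_def by (simp add: nth_rotate1 mod_Suc_eq)
qed (use assms in \<open>simp_all add: is_cycle_of_def\<close>)

lemma cycle_of_orbit_list:
  assumes "permutation f" "f y \<noteq> y"
  shows "is_cycle_of f (map (\<lambda>i. (f ^^ i) y) [0..<funpow_dist1 f y y])"
proof -
  have y: "y \<in> orbit f y"
    using assms(1) by (rule permutation_self_in_orbit)
  define L where "L = funpow_dist1 f y y"
  have "(f ^^ L) y = y"
    unfolding L_def using y by (rule funpow_dist1_prop)
  moreover have "L \<ge> 2"
    using \<open>(f ^^ L) y = y\<close> assms(2) by (cases "L = 1") (auto simp: L_def)
  moreover have "inj_on (\<lambda>i. (f ^^ i) y) {0..<L}"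
    unfolding L_def using y by (rule inj_on_funpow_dist1)
  moreover have "f ((f ^^ i) y) = (f ^^ (Suc i mod L)) y" if "i < L" for i
    using that \<open>(f ^^ L) y = y\<close> by (cases "Suc i = L") auto
  ultimately show ?thesis
    unfolding is_cycle_of_def L_def[symmetric] by (auto simp: distinct_map)
qed

lemma moved_point_in_ncycle:
  assumes "permutation f" "f y \<noteq> y"
  shows "\<exists>C \<in> ncycles f. y \<in> C"
proof -
  let ?zs = "map (\<lambda>i. (f ^^ i) y) [0..<funpow_dist1 f y y]"
  have "is_cycle_of f ?zs"
    using assms by (rule cycle_of_orbit_list)
  moreover from this have "y \<in> set ?zs"
    unfolding is_cycle_of_def by (auto simp: image_iff intro: bexI[of _ 0])
  ultimately show ?thesis
    unfolding ncycles_def by blast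
qed

lemma moved_point_last_of_cycle:
  assumes "permutation f" "f x \<noteq> x"
  obtains zs where "is_cycle_of f zs" "last zs = x"
proof -
  let ?zs = "map (\<lambda>i. (f ^^ i) x) [0..<funpow_dist1 f x x]"
  have cyc: "is_cycle_of f ?zs"
    using assms by (rule cycle_of_orbit_list)
  then have "?zs \<noteq> []" "hd ?zs = x"
    unfolding is_cycle_of_def by (auto simp: hd_map)
  then have "last (rotate1 ?zs) = x"
    by (simp add: rotate1_hd_tl)
  with cycle_of_rotate1[OF cyc] show ?thesis
    using that by blast
qed

definition deviations :: "(nat \<Rightarrow> nat) \<Rightarrow> (nat \<Rightarrow> nat) \<Rightarrow> nat set" where
  "deviations \<sigma> \<pi> = {i. \<sigma> i \<noteq> i \<and> \<sigma> i \<noteq> \<pi> i}"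

lemma N3_iff_card_deviations:
  assumes "r \<ge> 1" "\<sigma> permutes {1..n}" "wH n \<sigma> = r"
  shows "\<sigma> \<in> N3 n r \<pi> \<longleftrightarrow> card (deviations \<sigma> \<pi>) = 1"
proof -
  define M where "M = {i \<in> {1..n}. \<sigma> i \<noteq> i}"
  have "inj (\<lambda>i. (i, \<sigma> i))"
    by (rule injI) simp
  then have graph_card: "card ((\<lambda>i. (i, \<sigma> i)) ` A) = card A" for A
    by (rule card_image[OF inj_on_subset]) simp
  have "deviations \<sigma> \<pi> \<subseteq> M"
    unfolding deviations_def M_def using assms(2) permutes_not_in by fastforce
  moreover have "Tc n \<sigma> = (\<lambda>i. (i, \<sigma> i)) ` M"
    unfolding Tc_def M_def by auto
  moreover have "Tc n \<sigma> \<inter> Tc n \<pi> = (\<lambda>i. (i, \<sigma> i)) ` (M - deviations \<sigma> \<pi>)"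
    unfolding Tc_def M_def deviations_def by auto
  moreover have "card M = r"
    using assms(3) unfolding wH_def M_def by simp
  ultimately have "card (Tc n \<sigma>) = r"
    and "card (Tc n \<sigma> \<inter> Tc n \<pi>) = r - card (deviations \<sigma> \<pi>)"
    and "card (deviations \<sigma> \<pi>) \<le> r"
    using graph_card card_Diff_subset[of "deviations \<sigma> \<pi>" M] card_mono[of M]
    by (auto simp: M_def finite_subset)
  then show ?thesis
    unfolding N3_def using assms(1,2) by auto
qed

lemma funpow_along_agreeing_cycle:
  assumes "is_cycle_of \<sigma> zs" "\<forall>i < length zs - 1. \<pi> (zs ! i) = \<sigma> (zs ! i)" "i < length zs"
  shows "(\<pi> ^^ i) (zs ! 0) = zs ! i"
  using assms(3)
proof (induction i)
  case (Suc i)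
  then have "(\<pi> ^^ Suc i) (zs ! 0) = \<sigma> (zs ! i)"
    using assms(2) by simp
  also have "\<dots> = zs ! Suc i"
    using assms(1) Suc.prems unfolding is_cycle_of_def by simp
  finally show ?case .
qed simp

lemma cycle_of_prefix_extends:
  assumes "permutation \<pi>" "is_cycle_of \<sigma> zs"
    and agree: "\<forall>i < length zs - 1. \<pi> (zs ! i) = \<sigma> (zs ! i)"
    and leaves: "\<pi> (last zs) \<noteq> \<sigma> (last zs)"
  obtains ws where "is_cycle_of \<pi> ws" "length zs < length ws" "take (length zs) ws = zs"
proof -
  define t where "t = length zs"
  define y where "y = zs ! 0"
  have t: "t \<ge> 2" "distinct zs" "zs \<noteq> []"
    using assms(2) unfolding is_cycle_of_def t_def by auto
  have \<pi>_pow: "(\<pi> ^^ i) y = zs ! i" if "i < t" for i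
    using funpow_along_agreeing_cycle[OF assms(2) agree] that by (simp add: y_def t_def)
  have \<pi>_pow_ne: "(\<pi> ^^ i) y \<noteq> y" if "0 < i" "i < t" for i
    using \<pi>_pow[of i] that t nth_eq_iff_index_eq[OF t(2), of i 0] by (simp add: y_def t_def)
  txt \<open>At the last point \<open>\<pi>\<close> leaves the cycle instead of closing it.\<close>
  have overshoot: "(\<pi> ^^ t) y \<noteq> y"
  proof -
    have "(\<pi> ^^ t) y = \<pi> (zs ! (t - 1))"
      using \<pi>_pow[of "t - 1"] t by (cases t) auto
    also have "\<dots> \<noteq> \<sigma> (zs ! (t - 1))"
      using leaves t(3) by (simp add: last_conv_nth t_def)
    also have "\<sigma> (zs ! (t - 1)) = y"
    proof -
      have "t - 1 < t" "(t - 1 + 1) mod t = 0"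
        using t by simp_all
      then show ?thesis
        using assms(2) unfolding is_cycle_of_def t_def y_def by metis
    qed
    finally show ?thesis .
  qed
  define ws where "ws = map (\<lambda>i. (\<pi> ^^ i) y) [0..<funpow_dist1 \<pi> y y]"
  have ws: "is_cycle_of \<pi> ws"
    unfolding ws_def using assms(1) \<pi>_pow_ne[of 1] t(1) by (intro cycle_of_orbit_list) auto
  have "(\<pi> ^^ length ws) y = y" "length ws > 0"
    using funpow_dist1_prop[OF permutation_self_in_orbit[OF assms(1)]]
    by (simp_all only: ws_def length_map length_upt diff_zero zero_less_Suc)
  then have "t < length ws"
    using \<pi>_pow_ne overshoot by (metis linorder_neqE_nat)
  moreover have "take t ws = zs"
    using \<open>t < length ws\<close> \<pi>_pow by (intro nth_equalityI) (auto simp: ws_def t_def)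
  ultimately show ?thesis
    using that ws by (simp add: t_def)
qed

lemma truncated_cycle_deviations:
  assumes "is_cycle_of \<pi> ws" "is_cycle_of \<sigma> (take t ws)" "t < length ws"
  shows "set (take t ws) \<inter> deviations \<sigma> \<pi> = {ws ! (t - 1)}"
proof -
  have t: "t \<ge> 2" "distinct ws"
    using assms unfolding is_cycle_of_def by auto
  have \<sigma>_step: "\<sigma> (ws ! j) = ws ! ((j + 1) mod t)" if "j < t" for j
    using assms(2,3) that unfolding is_cycle_of_def by (auto simp: min_def)
  have \<pi>_step: "\<pi> (ws ! j) = ws ! (j + 1)" if "j < t" for j
    using assms(1,3) that unfolding is_cycle_of_def by auto
  have "ws ! j \<notin> deviations \<sigma> \<pi>" if "j < t - 1" for j
    using \<sigma>_step[of j] \<pi>_step[of j] that by (simp add: deviations_def)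
  moreover have "ws ! (t - 1) \<in> deviations \<sigma> \<pi>"
  proof -
    have "ws ! (t - 1) \<in> set (take t ws)"
      using t(1) assms(3) by (auto simp: set_conv_nth intro!: exI[of _ "t - 1"])
    then have "\<sigma> (ws ! (t - 1)) \<noteq> ws ! (t - 1)"
      by (rule cycle_of_moves[OF assms(2)])
    moreover have "ws ! 0 \<noteq> ws ! t"
      using t assms(3) nth_eq_iff_index_eq[OF t(2), of 0 t] by force
    ultimately show ?thesis
      using \<sigma>_step[of "t - 1"] \<pi>_step[of "t - 1"] t(1) by (simp add: deviations_def)
  qed
  moreover have "set (take t ws) = insert (ws ! (t - 1)) ((!) ws ` {0..<t - 1})"
  proof -
    have "{0..<t} = insert (t - 1) {0..<t - 1}"
      using t(1) by auto
    then show ?thesis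
      using assms(3) nth_image[of t ws] by simp
  qed
  ultimately show ?thesis
    by auto
qed

definition truncated_cycle :: "(nat \<Rightarrow> nat) \<Rightarrow> (nat \<Rightarrow> nat) \<Rightarrow> nat set \<Rightarrow> bool" where
  "truncated_cycle \<sigma> \<pi> C \<longleftrightarrow> (\<exists>ys t s. t \<ge> 2 \<and> s \<ge> 1 \<and> length ys = t + s \<and>
     is_cycle_of \<pi> ys \<and> is_cycle_of \<sigma> (take t ys) \<and> C = set (take t ys))"

lemma unshared_ncycle_meets_deviations:
  assumes "C \<in> ncycles \<sigma>" "\<not> cycle_shared \<sigma> \<pi> C"
  shows "C \<inter> deviations \<sigma> \<pi> \<noteq> {}"
  using assms cycle_of_moves unfolding ncycles_def cycle_shared_def deviations_def by blast

lemma single_deviation_imp_truncated_cycle: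
  assumes "permutation \<sigma>" "permutation \<pi>" "deviations \<sigma> \<pi> = {x}"
  shows "(\<exists>!C. C \<in> ncycles \<sigma> \<and> \<not> cycle_shared \<sigma> \<pi> C)
    \<and> (\<forall>C \<in> ncycles \<sigma>. \<not> cycle_shared \<sigma> \<pi> C \<longrightarrow> truncated_cycle \<sigma> \<pi> C)"
proof -
  have x: "\<sigma> x \<noteq> x" "\<sigma> x \<noteq> \<pi> x"
    using assms(3) unfolding deviations_def by auto
  obtain zs where zs: "is_cycle_of \<sigma> zs" "last zs = x"
    using moved_point_last_of_cycle[OF assms(1) x(1)] .
  have "zs \<noteq> []" "distinct zs"
    using zs(1) unfolding is_cycle_of_def by auto
  then have x_in: "x \<in> set zs"
    using zs(2) by auto
  have unshared_eq: "C = set zs" if C: "C \<in> ncycles \<sigma>" "\<not> cycle_shared \<sigma> \<pi> C" for C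
  proof -
    obtain ys where ys: "is_cycle_of \<sigma> ys" "C = set ys"
      using C(1) unfolding ncycles_def by blast
    have "x \<in> C"
      using unshared_ncycle_meets_deviations[OF C] assms(3) by auto
    then have "set ys = orbit \<sigma> x"
      using ys by (intro cycle_of_set_eq_orbit) simp_all
    then show ?thesis
      using ys(2) cycle_of_set_eq_orbit[OF zs(1) x_in] by simp
  qed
  have "set zs \<in> ncycles \<sigma>"
    using zs(1) unfolding ncycles_def by blast
  moreover have "\<not> cycle_shared \<sigma> \<pi> (set zs)"
    using x_in x(2) unfolding cycle_shared_def by blast
  moreover have "truncated_cycle \<sigma> \<pi> (set zs)"
  proof -
    have agree: "\<forall>i < length zs - 1. \<pi> (zs ! i) = \<sigma> (zs ! i)"
    proof (intro allI impI)
      fix i assume "i < length zs - 1"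
      then have "zs ! i \<in> set zs" "zs ! i \<noteq> x"
        using zs(2) \<open>zs \<noteq> []\<close> \<open>distinct zs\<close>
        by (auto simp: last_conv_nth nth_eq_iff_index_eq)
      moreover from this have "zs ! i \<notin> deviations \<sigma> \<pi>"
        using assms(3) by simp
      ultimately show "\<pi> (zs ! i) = \<sigma> (zs ! i)"
        using cycle_of_moves[OF zs(1)] by (auto simp: deviations_def)
    qed
    have "\<pi> (last zs) \<noteq> \<sigma> (last zs)"
      using zs(2) x(2) by simp
    then obtain ws where "is_cycle_of \<pi> ws" "length zs < length ws" "take (length zs) ws = zs"
      using cycle_of_prefix_extends[OF assms(2) zs(1) agree] by blast
    moreover have "length zs \<ge> 2"
      using zs(1) unfolding is_cycle_of_def by simp
    ultimately show ?thesis
      unfolding truncated_cycle_def using zs(1)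
      by (intro exI[of _ ws] exI[of _ "length zs"] exI[of _ "length ws - length zs"]) auto
  qed
  ultimately show ?thesis
    using unshared_eq by blast
qed

lemma truncated_cycle_imp_single_deviation:
  assumes "permutation \<sigma>"
    and unique: "\<exists>!C. C \<in> ncycles \<sigma> \<and> \<not> cycle_shared \<sigma> \<pi> C"
    and truncated: "\<forall>C \<in> ncycles \<sigma>. \<not> cycle_shared \<sigma> \<pi> C \<longrightarrow> truncated_cycle \<sigma> \<pi> C"
  shows "\<exists>x. deviations \<sigma> \<pi> = {x}"
proof -
  obtain C where C: "C \<in> ncycles \<sigma>" "\<not> cycle_shared \<sigma> \<pi> C"
    and C_unique: "\<And>C'. C' \<in> ncycles \<sigma> \<Longrightarrow> \<not> cycle_shared \<sigma> \<pi> C' \<Longrightarrow> C' = C"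
    using unique by blast
  have "truncated_cycle \<sigma> \<pi> C"
    using truncated C by blast
  then obtain ws t s where ws: "is_cycle_of \<pi> ws" "is_cycle_of \<sigma> (take t ws)"
    and len: "s \<ge> 1" "length ws = t + s" and C_eq: "C = set (take t ws)"
    unfolding truncated_cycle_def by blast
  have "deviations \<sigma> \<pi> \<subseteq> C"
  proof
    fix z assume "z \<in> deviations \<sigma> \<pi>"
    then have z: "\<sigma> z \<noteq> z" "\<sigma> z \<noteq> \<pi> z"
      by (simp_all add: deviations_def)
    then obtain C' where "C' \<in> ncycles \<sigma>" "z \<in> C'"
      using moved_point_in_ncycle[OF assms(1)] by blast
    moreover from this have "\<not> cycle_shared \<sigma> \<pi> C'"
      using z(2) unfolding cycle_shared_def by blast
    ultimately show "z \<in> C"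
      using C_unique by blast
  qed
  then have "deviations \<sigma> \<pi> = C \<inter> deviations \<sigma> \<pi>"
    by blast
  then show ?thesis
    using truncated_cycle_deviations[OF ws] len C_eq by auto
qed

theorem lemma12:
  fixes n r :: nat and \<pi> \<sigma> :: "nat \<Rightarrow> nat"
  assumes "r \<ge> 2" and "n \<ge> 2 * r - 1"
    and "\<pi> permutes {1..n}" and "\<sigma> permutes {1..n}"
    and "wH n \<pi> = 2 * r - 1" and "wH n \<sigma> = r"
  shows "\<sigma> \<in> N3 n r \<pi> \<longleftrightarrow>
    (\<exists>!C. C \<in> ncycles \<sigma> \<and> \<not> cycle_shared \<sigma> \<pi> C) \<and>
    (\<forall>C \<in> ncycles \<sigma>. \<not> cycle_shared \<sigma> \<pi> C \<longrightarrow>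
       (\<exists>ys t s. t \<ge> 2 \<and> s \<ge> 1 \<and> length ys = t + s \<and>
          is_cycle_of \<pi> ys \<and> is_cycle_of \<sigma> (take t ys) \<and> C = set (take t ys)))"
proof -
  have perms: "permutation \<sigma>" "permutation \<pi>"
    using assms(3,4) permutation_permutes by blast+
  have "\<sigma> \<in> N3 n r \<pi> \<longleftrightarrow> card (deviations \<sigma> \<pi>) = 1"
    using assms(1,4,6) by (intro N3_iff_card_deviations) simp_all
  also have "\<dots> \<longleftrightarrow> (\<exists>x. deviations \<sigma> \<pi> = {x})"
    by (simp add: card_1_singleton_iff)
  also have "\<dots> \<longleftrightarrow> (\<exists>!C. C \<in> ncycles \<sigma> \<and> \<not> cycle_shared \<sigma> \<pi> C) \<and>
      (\<forall>C \<in> ncycles \<sigma>. \<not> cycle_shared \<sigma> \<pi> C \<longrightarrow> truncated_cycle \<sigma> \<pi> C)"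
    (is "_ \<longleftrightarrow> ?unique \<and> ?truncated")
  proof
    assume "\<exists>x. deviations \<sigma> \<pi> = {x}"
    then obtain x where "deviations \<sigma> \<pi> = {x}" ..
    then show "?unique \<and> ?truncated"
      by (rule single_deviation_imp_truncated_cycle[OF perms])
  next
    assume "?unique \<and> ?truncated"
    then show "\<exists>x. deviations \<sigma> \<pi> = {x}"
      by (elim conjE) (rule truncated_cycle_imp_single_deviation[OF perms(1)])
  qed
  finally show ?thesis
    unfolding truncated_cycle_def .
qed

end
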